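(* Let $d\ge2$ and let $f:\mathbb{R}^d\to\mathbb{R}$ be bounded, Borel-measurable, with $\mathrm{supp}(f)\subset[0,1]^d$. Then for every $r>0$ and $y\in\mathbb{R}^d$, \[U(y)=\max_{x\in\partial B_r(y),\ x\le y}\{U(x)+w(x,y)\}.\]
   Context: For $x,y\in\mathbb{R}^d$, $x\leqq y$ means $x_i\le y_i$ for all $i$, and $x\le y$ means $x\leqq y$ and $x\ne y$. $B_r(y)=\{x:|x-y|<r\}$. Let $\mathcal{A}$ be the set of $\gamma\in C^1([0,1];\mathbb{R}^d)$ such that for every $t$, all components of $\gamma'(t)$ are nonnegative and $\gamma'(t)\ne0$. For $\gamma\in\mathcal{A}$, $J(\gamma)=\int_0^1 f(\gamma(t))^{1/d}(\gamma_1'(t)\cdots\gamma_d'(t))^{1/d}\,dt$, and $U(x)=\sup\{J(\gamma):\gamma\in\mathcal{A},\ \gamma(1)\leqq x\}$. For a curve $\gamma$ and a point $x$, write $x\leqq\gamma\leqq y$ if $x\leqq\gamma(t)\leqq y$ for all $t\in[0,1]$. Define $w(x,y)=\sup\{J(\gamma):\gamma\in\mathcal{A},\ x\leqq\gamma\leqq y\}$ if $x\leqq y$, and $w(x,y)=0$ otherwise. *)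

theory Defs
  imports "HOL-Analysis.Analysis"
begin

definition cle :: "real^'n \<Rightarrow> real^'n \<Rightarrow> bool" where
  "cle x y \<longleftrightarrow> (\<forall>i. x $ i \<le> y $ i)"

definition dcurve :: "(real \<Rightarrow> real^'n) \<Rightarrow> real \<Rightarrow> real^'n" where
  "dcurve \<gamma> t = vector_derivative \<gamma> (at t within {0..1})"

definition admissible :: "(real \<Rightarrow> real^'n) \<Rightarrow> bool" where
  "admissible \<gamma> \<longleftrightarrow>
     (\<exists>\<gamma>'. (\<forall>t\<in>{0..1}. (\<gamma> has_vector_derivative \<gamma>' t) (at t within {0..1}))
          \<and> continuous_on {0..1} \<gamma>')
   \<and> (\<forall>t\<in>{0..1}. (\<forall>i. 0 \<le> dcurve \<gamma> t $ i) \<and> dcurve \<gamma> t \<noteq> 0)"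

definition Jfun :: "(real^'n \<Rightarrow> real) \<Rightarrow> (real \<Rightarrow> real^'n) \<Rightarrow> real" where
  "Jfun f \<gamma> = integral {0..1}
     (\<lambda>t. f (\<gamma> t) powr (1 / real CARD('n)) *
          (\<Prod>i\<in>UNIV. dcurve \<gamma> t $ i) powr (1 / real CARD('n)))"

definition Ufun :: "(real^'n \<Rightarrow> real) \<Rightarrow> real^'n \<Rightarrow> real" where
  "Ufun f x = Sup {Jfun f \<gamma> | \<gamma>. admissible \<gamma> \<and> cle (\<gamma> 1) x}"

definition wfun :: "(real^'n \<Rightarrow> real) \<Rightarrow> real^'n \<Rightarrow> real^'n \<Rightarrow> real" where
  "wfun f x y = (if cle x y then
      Sup {Jfun f \<gamma> | \<gamma>. admissible \<gamma> \<and> (\<forall>t\<in>{0..1}. cle x (\<gamma> t) \<and> cle (\<gamma> t) y)}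
    else 0)"

end

theory Submission
  imports Defs
begin

text \<open>For x \<le> y, x \<noteq> y, a curve ending below x followed by a curve in the box [x, y] gives
  U(x) + w(x, y) \<le> U(y); to stay C^1 the two pieces are joined by a cubic connector, and
  cutting short end pieces off both curves makes the loss arbitrarily small. Conversely, an
  admissible curve ending below y either crosses the sphere of radius r around y at a point x
  (and splits there into a part ending below x and a part in [x, y]), ends outside the ball
  (then a point x of the sphere on the segment from its endpoint to y dominates it), or stays
  inside the ball (then x is found on the diagonal below its starting point); in each case
  J(\<gamma>) \<le> U(x) + w(x, y). Finally, by AM-GM a curve piece along which one coordinate grows by
  at most \<epsilon> costs at most (\<epsilon> sup f)^(1/d); hence x \<mapsto> U(x) + w(x, y) is continuous and
  attains its maximum on the compact set of points of the sphere below y.\<close>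

lemma cle_refl: "cle x x"
  unfolding cle_def by simp

lemma cle_trans: "cle x y \<Longrightarrow> cle y z \<Longrightarrow> cle x z"
  unfolding cle_def by (meson order_trans)

lemma cle_uminus: "cle (- a) (- b) \<longleftrightarrow> cle b a"
  unfolding cle_def by simp

lemma closed_cle_below: "closed {z::real^'n. cle z x}"
  unfolding cle_def by (simp add: closed_Collect_all closed_Collect_le continuous_on_component)

lemma closed_cle_above: "closed {z::real^'n. cle x z}"
  unfolding cle_def by (simp add: closed_Collect_all closed_Collect_le continuous_on_component)

lemma compact_preimage_closed_Icc:
  fixes \<gamma> :: "real \<Rightarrow> 'a::topological_space"
  assumes "continuous_on {a..b} \<gamma>" "closed C"
  shows "compact {t \<in> {a..b}. \<gamma> t \<in> C}"
proof -
  have "closed ({a..b} \<inter> \<gamma> -` C)"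
    using assms by (intro continuous_closed_preimage) auto
  moreover have "{t \<in> {a..b}. \<gamma> t \<in> C} = {a..b} \<inter> \<gamma> -` C"
    by auto
  ultimately show ?thesis
    by (metis bounded_Int bounded_closed_interval compact_eq_bounded_closed)
qed

lemma cle_shift_if_norm_le:
  fixes x x' :: "real^'n"
  assumes "norm (x - x') \<le> e"
  shows "cle x' (x + e *\<^sub>R 1)" "cle (x - e *\<^sub>R 1) x'"
proof -
  have "\<bar>x $ i - x' $ i\<bar> \<le> e" for i
    using component_le_norm_cart[of "x - x'" i] assms by simp
  then show "cle x' (x + e *\<^sub>R 1)" "cle (x - e *\<^sub>R 1) x'"
    unfolding cle_def by (auto simp: abs_le_iff algebra_simps)
qed

lemma cube_component_increment: "x \<in> cbox 0 1 \<Longrightarrow> y \<in> cbox 0 1 \<Longrightarrow> y $ i - x $ i \<le> (1::real)"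
  unfolding mem_box_cart by (smt (verit) zero_index one_index)

lemma sphere_point_between:
  fixes y z :: "real^'n"
  assumes zy: "cle z y" and r: "0 < r" "r \<le> dist y z"
  obtains x where "dist y x = r" "cle z x" "cle x y"
proof -
  define l where "l = r / dist y z"
  have "0 < dist y z"
    using r by linarith
  then have l: "0 < l" "l \<le> 1"
    unfolding l_def using r by auto
  define x where "x = y + l *\<^sub>R (z - y)"
  have "dist y x = r"
    unfolding x_def l_def using \<open>0 < dist y z\<close> r by (simp add: dist_norm norm_minus_commute)
  moreover have "z $ i \<le> x $ i \<and> x $ i \<le> y $ i" for i
  proof -
    have "z $ i - y $ i \<le> 0" using zy unfolding cle_def by simp
    then have "l * (z $ i - y $ i) \<le> 0" "(1 - l) * (z $ i - y $ i) \<le> 0"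
      using l by (simp_all add: mult_nonneg_nonpos)
    then show ?thesis
      unfolding x_def by (simp add: algebra_simps)
  qed
  ultimately show thesis
    using that unfolding cle_def by blast
qed

lemma sphere_point_below:
  fixes y z :: "real^'n"
  assumes zy: "cle z y" and r: "dist y z \<le> r"
  obtains x where "dist y x = r" "cle x z"
proof -
  define \<phi> where "\<phi> c = dist y (z - c *\<^sub>R 1)" for c
  have "r \<le> \<phi> r"
  proof -
    have "\<bar>(y - (z - r *\<^sub>R 1)) $ undefined\<bar> \<le> \<phi> r"
      unfolding \<phi>_def dist_norm by (rule component_le_norm_cart)
    moreover have "z $ undefined \<le> y $ undefined"
      using zy unfolding cle_def by simp
    ultimately show ?thesis by simp
  qed
  moreover have "\<phi> 0 \<le> r"
    unfolding \<phi>_def using r by simp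
  moreover have "0 \<le> r"
    using r zero_le_dist[of y z] by linarith
  moreover have "continuous_on {0..r} \<phi>"
    unfolding \<phi>_def by (intro continuous_intros)
  ultimately obtain c where "0 \<le> c" "\<phi> c = r"
    using IVT'[of \<phi> 0 r r] by auto
  then show thesis
    by (intro that[of "z - c *\<^sub>R 1"]) (auto simp: \<phi>_def cle_def)
qed

section \<open>Curves with nonnegative velocity\<close>

definition gmean :: "real^'n \<Rightarrow> real" where
  "gmean v = (\<Prod>i\<in>UNIV. v $ i) powr (1 / real CARD('n))"

lemma gmean_nonneg: "0 \<le> gmean v"
  unfolding gmean_def by simp

lemma gmean_scaleR:
  assumes "m > 0" "\<forall>i. 0 \<le> v $ i"
  shows "gmean (m *\<^sub>R v) = m * gmean (v::real^'n)"
proof -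
  have "(\<Prod>i\<in>UNIV. (m *\<^sub>R v) $ i) = m ^ CARD('n) * (\<Prod>i\<in>UNIV. v $ i)"
    by (simp add: prod.distrib)
  moreover have "(m ^ CARD('n)) powr (1 / real CARD('n)) = m"
    using assms(1) by (simp add: powr_realpow[symmetric] powr_powr)
  moreover have "0 \<le> (\<Prod>i\<in>UNIV. v $ i)"
    using assms(2) by (simp add: prod_nonneg)
  ultimately show ?thesis
    unfolding gmean_def using assms(1) by (simp add: powr_mult)
qed

lemma continuous_on_gmean:
  "continuous_on S g \<Longrightarrow> (\<And>t. t \<in> S \<Longrightarrow> \<forall>i. 0 \<le> g t $ i) \<Longrightarrow> continuous_on S (\<lambda>t. gmean (g t :: real^'n))"
  unfolding gmean_def by (intro continuous_on_powr' continuous_intros) (auto simp: prod_nonneg)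

lemma gmean_le_weighted_mean:
  fixes v :: "real^'n"
  assumes "\<forall>i. 0 \<le> v $ i" "\<forall>i. 0 < c i" "(\<Prod>i\<in>UNIV. c i) = 1"
  shows "gmean v \<le> (\<Sum>i\<in>UNIV. c i * v $ i) / real CARD('n)"
proof -
  have "(\<Prod>i\<in>UNIV. c i * v $ i) = (\<Prod>i\<in>UNIV. v $ i)"
    using assms(3) by (simp add: prod.distrib)
  moreover have "(\<Prod>i\<in>UNIV. c i * v $ i) powr (1 / real CARD('n)) \<le> (\<Sum>i\<in>UNIV. c i * v $ i / real CARD('n))"
    using assms(1,2) by (intro arith_geom_mean) (simp_all add: less_imp_le)
  ultimately show ?thesis
    unfolding gmean_def by (simp add: sum_divide_distrib)
qed

definition admissible_on :: "real \<Rightarrow> real \<Rightarrow> (real \<Rightarrow> real^'n) \<Rightarrow> (real \<Rightarrow> real^'n) \<Rightarrow> bool" where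
  "admissible_on a b \<gamma> \<gamma>' \<longleftrightarrow> a < b
     \<and> (\<forall>t\<in>{a..b}. (\<gamma> has_vector_derivative \<gamma>' t) (at t within {a..b}))
     \<and> continuous_on {a..b} \<gamma>' \<and> (\<forall>t\<in>{a..b}. (\<forall>i. 0 \<le> \<gamma>' t $ i) \<and> \<gamma>' t \<noteq> 0)"

definition J_on :: "(real^'n \<Rightarrow> real) \<Rightarrow> (real \<Rightarrow> real^'n) \<Rightarrow> (real \<Rightarrow> real^'n) \<Rightarrow> real \<Rightarrow> real \<Rightarrow> real" where
  "J_on f \<gamma> \<gamma>' a b = integral {a..b} (\<lambda>t. f (\<gamma> t) powr (1 / real CARD('n)) * gmean (\<gamma>' t))"

lemma dcurve_eq_if_admissible_on:
  assumes "admissible_on 0 1 \<gamma> \<gamma>'" "t \<in> {0..1}"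
  shows "dcurve \<gamma> t = \<gamma>' t"
  using assms unfolding admissible_on_def dcurve_def
  by (intro vector_derivative_within_closed_interval) auto

lemma admissible_if_admissible_on: "admissible_on 0 1 \<gamma> \<gamma>' \<Longrightarrow> admissible \<gamma>"
  unfolding admissible_def using dcurve_eq_if_admissible_on[of \<gamma> \<gamma>']
  by (auto simp: admissible_on_def)

lemma Jfun_eq_J_on: "admissible_on 0 1 \<gamma> \<gamma>' \<Longrightarrow> Jfun f \<gamma> = J_on f \<gamma> \<gamma>' 0 1"
  unfolding Jfun_def J_on_def gmean_def
  by (rule integral_cong) (simp add: dcurve_eq_if_admissible_on)

lemma admissibleE:
  assumes "admissible \<gamma>"
  obtains \<gamma>' where "admissible_on 0 1 \<gamma> \<gamma>'"
proof -
  obtain \<gamma>' where \<gamma>': "\<forall>t\<in>{0..1}. (\<gamma> has_vector_derivative \<gamma>' t) (at t within {0..1})"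
    "continuous_on {0..1} \<gamma>'"
    using assms unfolding admissible_def by blast
  have "dcurve \<gamma> t = \<gamma>' t" if "t \<in> {0..1}" for t
    using \<gamma>' that unfolding dcurve_def by (intro vector_derivative_within_closed_interval) auto
  with assms \<gamma>' have "admissible_on 0 1 \<gamma> \<gamma>'"
    unfolding admissible_on_def admissible_def by auto
  then show thesis by (rule that)
qed

lemma admissible_on_continuous: "admissible_on a b \<gamma> \<gamma>' \<Longrightarrow> continuous_on {a..b} \<gamma>"
  unfolding admissible_on_def continuous_on_eq_continuous_within
  using has_vector_derivative_continuous by blast

lemma admissible_on_subinterval:
  "admissible_on a b \<gamma> \<gamma>' \<Longrightarrow> a \<le> s \<Longrightarrow> s < t \<Longrightarrow> t \<le> b \<Longrightarrow> admissible_on s t \<gamma> \<gamma>'"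
  unfolding admissible_on_def
  by (auto intro: has_vector_derivative_within_subset[where S="{a..b}"]
      continuous_on_subset[where s="{a..b}"])

lemma admissible_on_has_integral:
  assumes "admissible_on a b \<gamma> \<gamma>'" "a \<le> s" "s \<le> t" "t \<le> b"
  shows "(\<gamma>' has_integral (\<gamma> t - \<gamma> s)) {s..t}"
  using assms unfolding admissible_on_def
  by (intro fundamental_theorem_of_calculus)
    (auto intro: has_vector_derivative_within_subset[where S="{a..b}"])

lemma admissible_on_has_integral_weighted:
  fixes \<gamma> \<gamma>' :: "real \<Rightarrow> real^'n"
  assumes "admissible_on a b \<gamma> \<gamma>'" "a \<le> s" "s \<le> t" "t \<le> b"
  shows "((\<lambda>u. \<Sum>i\<in>UNIV. c i * \<gamma>' u $ i) has_integral (\<Sum>i\<in>UNIV. c i * (\<gamma> t $ i - \<gamma> s $ i))) {s..t}"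
proof -
  have "((\<lambda>u. \<gamma>' u $ i) has_integral (\<gamma> t $ i - \<gamma> s $ i)) {s..t}" for i
    using has_integral_linear[OF admissible_on_has_integral[OF assms] bounded_linear_vec_nth]
    by (simp add: o_def)
  then show ?thesis
    by (intro has_integral_sum has_integral_mult_right) auto
qed

lemma admissible_on_cle:
  assumes "admissible_on a b \<gamma> \<gamma>'" "a \<le> s" "s \<le> t" "t \<le> b"
  shows "cle (\<gamma> s) (\<gamma> t)"
  unfolding cle_def
proof
  fix i
  have "0 \<le> \<gamma>' u \<bullet> axis i 1" if "u \<in> {s..t}" for u
    using assms that unfolding admissible_on_def by (auto simp: inner_axis)
  then have "0 \<le> (\<gamma> t - \<gamma> s) \<bullet> axis i 1"
    by (intro has_integral_component_nonneg[OF _ admissible_on_has_integral[OF assms]]) auto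
  then show "\<gamma> s $ i \<le> \<gamma> t $ i" by (simp add: inner_axis)
qed

lemma admissible_on_component_less:
  fixes \<gamma> \<gamma>' :: "real \<Rightarrow> real^'n"
  assumes \<gamma>: "admissible_on a b \<gamma> \<gamma>'" and st: "a \<le> s" "s < t" "t \<le> b"
    and u: "u \<in> {s..t}" and pos: "0 < \<gamma>' u $ i"
  shows "\<gamma> s $ i < \<gamma> t $ i"
proof (rule ccontr)
  assume "\<not> \<gamma> s $ i < \<gamma> t $ i"
  moreover have "\<gamma> s $ i \<le> \<gamma> v $ i \<and> \<gamma> v $ i \<le> \<gamma> t $ i" if "v \<in> {s..t}" for v
    using admissible_on_cle[OF \<gamma>, of s v] admissible_on_cle[OF \<gamma>, of v t] that st
    unfolding cle_def by auto
  ultimately have const: "\<gamma> v $ i = \<gamma> s $ i" if "v \<in> {s..t}" for v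
    using that by fastforce
  have "(\<gamma> has_vector_derivative \<gamma>' u) (at u within {s..t})"
    using \<gamma> st u unfolding admissible_on_def
    by (auto intro: has_vector_derivative_within_subset[where S="{a..b}"])
  then have "((\<lambda>v. \<gamma> v $ i) has_vector_derivative \<gamma>' u $ i) (at u within {s..t})"
    using bounded_linear.has_derivative[OF bounded_linear_vec_nth, of \<gamma> "\<lambda>h. h *\<^sub>R \<gamma>' u"]
    unfolding has_vector_derivative_def by (simp add: mult.commute)
  moreover have "((\<lambda>v. \<gamma> v $ i) has_vector_derivative 0) (at u within {s..t})"
    by (rule has_vector_derivative_weaken[OF has_vector_derivative_const[of "\<gamma> s $ i"] u order_refl]) (metis const)
  ultimately have "\<gamma>' u $ i = 0"
    using vector_derivative_within_closed_interval[OF st(2) u] by metis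
  with pos show False by simp
qed

lemma admissible_on_gmean_bounded:
  fixes \<gamma>' :: "real \<Rightarrow> real^'n"
  assumes "admissible_on a b \<gamma> \<gamma>'"
  obtains B where "\<forall>t\<in>{a..b}. gmean (\<gamma>' t) \<le> B"
proof -
  have "continuous_on {a..b} (\<lambda>t. gmean (\<gamma>' t))"
    using assms unfolding admissible_on_def by (intro continuous_on_gmean) auto
  then have "bounded ((\<lambda>t. gmean (\<gamma>' t)) ` {a..b})"
    by (intro compact_imp_bounded compact_continuous_image) auto
  then obtain B where "\<forall>t\<in>{a..b}. \<bar>gmean (\<gamma>' t)\<bar> \<le> B"
    unfolding bounded_real by auto
  then show thesis
    using that abs_le_D1 by blast
qed

lemma admissible_on_preimage_cbox:
  fixes \<gamma> \<gamma>' :: "real \<Rightarrow> real^'n"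
  assumes \<gamma>: "admissible_on a b \<gamma> \<gamma>'" and st: "a \<le> s" "t \<le> b"
  obtains "{u \<in> {s..t}. \<gamma> u \<in> cbox l h} = {}"
    | t1 t2 where "s \<le> t1" "t1 \<le> t2" "t2 \<le> t" "{u \<in> {s..t}. \<gamma> u \<in> cbox l h} = {t1..t2}"
proof -
  define T where "T = {u \<in> {s..t}. \<gamma> u \<in> cbox l h}"
  have "continuous_on {s..t} \<gamma>"
    using admissible_on_continuous[OF \<gamma>] st by (auto elim: continuous_on_subset)
  then have "compact T"
    unfolding T_def by (intro compact_preimage_closed_Icc closed_cbox)
  moreover have "is_interval T"
    unfolding is_interval_1
  proof (intro ballI allI impI)
    fix u1 u2 x assume u: "u1 \<in> T" "u2 \<in> T" "u1 \<le> x \<and> x \<le> u2"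
    then have "a \<le> u1" "u2 \<le> b"
      using st unfolding T_def by auto
    then have "cle (\<gamma> u1) (\<gamma> x)" "cle (\<gamma> x) (\<gamma> u2)"
      using u(3) by (auto intro: admissible_on_cle[OF \<gamma>])
    then have "\<gamma> u1 $ i \<le> \<gamma> x $ i" "\<gamma> x $ i \<le> \<gamma> u2 $ i" for i
      unfolding cle_def by auto
    moreover have "l $ i \<le> \<gamma> u1 $ i" "\<gamma> u2 $ i \<le> h $ i" for i
      using u unfolding T_def mem_box_cart by auto
    ultimately have "\<gamma> x \<in> cbox l h"
      unfolding mem_box_cart by (meson order_trans)
    with u show "x \<in> T"
      unfolding T_def by auto
  qed
  ultimately obtain t1 t2 where T: "T = {t1..t2}"
    using connected_compact_interval_1 is_interval_connected by blast
  show thesis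
  proof (cases "t1 \<le> t2")
    case True
    then have "t1 \<in> T" "t2 \<in> T"
      using T by auto
    then show thesis
      using that(2)[OF _ True _ T[unfolded T_def]] unfolding T_def by auto
  next
    case False
    then show thesis
      using that(1) T[unfolded T_def] by simp
  qed
qed

lemma admissible_on_line:
  fixes p v :: "real^'n"
  assumes "\<forall>i. 0 \<le> v $ i" "v \<noteq> 0"
  shows "admissible_on 0 1 (\<lambda>t. p + t *\<^sub>R v) (\<lambda>t. v)"
  unfolding admissible_on_def using assms by (auto intro!: derivative_eq_intros)

lemma admissible_on_affine:
  assumes \<gamma>: "admissible_on a b \<gamma> \<gamma>'" and m: "m > 0"
  shows "admissible_on ((a - k) / m) ((b - k) / m) (\<lambda>s. \<gamma> (m * s + k)) (\<lambda>s. m *\<^sub>R \<gamma>' (m * s + k))"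
proof -
  let ?a = "(a - k) / m" and ?b = "(b - k) / m" and ?h = "\<lambda>s. m * s + k"
  have img: "?h ` {?a..?b} = {a..b}"
    using \<gamma> m unfolding admissible_on_def image_affinity_atLeastAtMost
    by (auto simp: divide_le_cancel)
  then have mem: "?h s \<in> {a..b}" if "s \<in> {?a..?b}" for s
    using that by blast
  have der: "((\<lambda>s. \<gamma> (?h s)) has_vector_derivative m *\<^sub>R \<gamma>' (?h s)) (at s within {?a..?b})"
    if s: "s \<in> {?a..?b}" for s
  proof -
    have "(?h has_vector_derivative m) (at s within {?a..?b})"
      by (auto intro!: derivative_eq_intros simp: has_real_derivative_iff_has_vector_derivative[symmetric])
    moreover have "(\<gamma> has_vector_derivative \<gamma>' (?h s)) (at (?h s) within ?h ` {?a..?b})"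
      using \<gamma> imageI[OF s, of ?h] unfolding img admissible_on_def by auto
    ultimately show ?thesis
      using vector_diff_chain_within[of ?h] by (simp add: o_def)
  qed
  have "continuous_on {?a..?b} (\<gamma>' \<circ> ?h)"
    using \<gamma> img unfolding admissible_on_def by (intro continuous_on_compose continuous_intros) auto
  then have "continuous_on {?a..?b} (\<lambda>s. m *\<^sub>R \<gamma>' (?h s))"
    by (intro continuous_intros) (simp add: o_def)
  moreover have "(\<forall>i. 0 \<le> m *\<^sub>R \<gamma>' (?h s) $ i) \<and> m *\<^sub>R \<gamma>' (?h s) \<noteq> 0" if "s \<in> {?a..?b}" for s
    using \<gamma> m mem[OF that] unfolding admissible_on_def by auto
  ultimately show ?thesis
    using \<gamma> m der unfolding admissible_on_def by (auto simp: divide_strict_right_mono)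
qed

lemma J_on_affine:
  fixes \<gamma> \<gamma>' :: "real \<Rightarrow> real^'n"
  assumes \<gamma>: "admissible_on a b \<gamma> \<gamma>'" and m: "m > 0"
  shows "J_on f (\<lambda>s. \<gamma> (m * s + k)) (\<lambda>s. m *\<^sub>R \<gamma>' (m * s + k)) ((a - k) / m) ((b - k) / m)
       = J_on f \<gamma> \<gamma>' a b"
proof -
  define F where "F t = f (\<gamma> t) powr (1 / real CARD('n)) * gmean (\<gamma>' t)" for t
  have "J_on f (\<lambda>s. \<gamma> (m * s + k)) (\<lambda>s. m *\<^sub>R \<gamma>' (m * s + k)) ((a - k) / m) ((b - k) / m)
      = integral {(a - k) / m..(b - k) / m} (\<lambda>s. m * F (m * s + k))"
    unfolding J_on_def F_def using \<gamma> m
    by (intro integral_cong) (auto simp: admissible_on_def gmean_scaleR field_simps)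
  also have "\<dots> = integral ((\<lambda>x. x / m) ` {a - k..b - k}) (\<lambda>s. m * F (m * s + k))"
    using m by simp
  also have "\<dots> = integral {a - k..b - k} (\<lambda>x. F (x + k))"
    using m integral_stretch_real[of m "a - k" "b - k" "\<lambda>x. F (x + k)"] by simp
  also have "\<dots> = J_on f \<gamma> \<gamma>' a b"
    using integral_shift_cbox[of a k b F] unfolding J_on_def F_def by simp
  finally show ?thesis .
qed

lemma admissible_on_rescale_01:
  assumes \<gamma>: "admissible_on a b \<gamma> \<gamma>'"
  obtains \<eta> \<eta>' where "admissible_on 0 1 \<eta> \<eta>'" "J_on f \<eta> \<eta>' 0 1 = J_on f \<gamma> \<gamma>' a b"
    "\<eta> 1 = \<gamma> b" "\<eta> ` {0..1} = \<gamma> ` {a..b}"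
proof -
  define m where "m = b - a"
  have m: "m > 0" and ab: "(a - a) / m = 0" "(b - a) / m = 1"
    using \<gamma> unfolding m_def admissible_on_def by auto
  have "(\<lambda>s. m * s + a) ` {0..1} = {a..b}"
    using m unfolding image_affinity_atLeastAtMost by (simp add: m_def)
  then have "(\<lambda>s. \<gamma> (m * s + a)) ` {0..1} = \<gamma> ` {a..b}"
    by (metis image_image)
  with admissible_on_affine[OF \<gamma> m, of a] J_on_affine[OF \<gamma> m, of f a] ab show thesis
    by (intro that) (auto simp: m_def)
qed

lemma admissible_on_shift:
  assumes "admissible_on a b \<gamma> \<gamma>'"
  shows "admissible_on (a - k) (b - k) (\<lambda>s. \<gamma> (s + k)) (\<lambda>s. \<gamma>' (s + k))"
  using admissible_on_affine[OF assms, of 1 k] by (simp add: add.commute)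

lemma J_on_shift:
  fixes \<gamma> \<gamma>' :: "real \<Rightarrow> real^'n"
  assumes "admissible_on a b \<gamma> \<gamma>'"
  shows "J_on f (\<lambda>s. \<gamma> (s + k)) (\<lambda>s. \<gamma>' (s + k)) (a - k) (b - k) = J_on f \<gamma> \<gamma>' a b"
  using J_on_affine[OF assms, where m=1 and k=k and f=f] by (simp add: add.commute)

lemma admissible_on_glue:
  assumes \<gamma>: "admissible_on a c \<gamma> \<gamma>'" and \<eta>: "admissible_on c b \<eta> \<eta>'"
    and "\<gamma> c = \<eta> c" "\<gamma>' c = \<eta>' c"
  shows "admissible_on a b (\<lambda>t. if t \<le> c then \<gamma> t else \<eta> t) (\<lambda>t. if t \<le> c then \<gamma>' t else \<eta>' t)"
proof -
  have ac: "a < c" and cb: "c < b" using \<gamma> \<eta> unfolding admissible_on_def by auto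
  have U: "{a..b} = {a..c} \<union> {c..b}" and I: "closure {a..c} \<inter> closure {c..b} = {c}"
    using ac cb by auto
  have der: "((\<lambda>t. if t \<le> c then \<gamma> t else \<eta> t) has_vector_derivative (if t \<le> c then \<gamma>' t else \<eta>' t))
      (at t within {a..b})" if t: "t \<in> {a..b}" for t
  proof -
    have "((\<lambda>x. if x \<in> {a..c} then \<gamma> x else \<eta> x) has_vector_derivative
        (if t \<in> {a..c} then \<gamma>' t else \<eta>' t)) (at t within {a..b})"
      apply (rule has_vector_derivative_If_within_closures[OF _ U])
      subgoal using t U by blast
      subgoal using \<gamma> ac unfolding I admissible_on_def by (simp add: insert_absorb)
      subgoal using \<eta> cb unfolding I admissible_on_def by (simp add: insert_absorb)
      subgoal using assms(3,4) by (auto simp: closure_closed)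
      subgoal using assms(3,4) by (auto simp: closure_closed)
      done
    then show ?thesis
      using has_vector_derivative_weaken[OF _ t order_refl, of _ _ "\<lambda>t. if t \<le> c then \<gamma> t else \<eta> t"] t
      by (smt (verit, best) atLeastAtMost_iff)
  qed
  have "continuous_on {t \<in> {a..b}. t \<le> c} \<gamma>'" "continuous_on {t \<in> {a..b}. c \<le> t} \<eta>'"
    using \<gamma> \<eta> unfolding admissible_on_def by (auto elim!: continuous_on_subset)
  then have "continuous_on {a..b} (\<lambda>t. if t \<le> c then \<gamma>' t else \<eta>' t)"
    by (rule continuous_on_cases_le[where h="\<lambda>t. t"]) (use assms(4) in \<open>auto intro: continuous_on_id\<close>)
  with ac cb der \<gamma> \<eta> show ?thesis
    unfolding admissible_on_def by auto
qed

lemma J_on_nonneg: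
  fixes \<gamma> \<gamma>' :: "real \<Rightarrow> real^'n"
  shows "0 \<le> J_on f \<gamma> \<gamma>' s t"
  unfolding J_on_def
  by (cases "(\<lambda>t. f (\<gamma> t) powr (1 / real CARD('n)) * gmean (\<gamma>' t)) integrable_on {s..t}")
    (auto intro!: integral_nonneg simp: gmean_nonneg not_integrable_integral)

lemma Jfun_nonneg: "admissible \<gamma> \<Longrightarrow> 0 \<le> Jfun f \<gamma>"
  by (metis admissibleE Jfun_eq_J_on J_on_nonneg)

lemma exists_admissible_ending_at: "\<exists>\<gamma>. admissible \<gamma> \<and> \<gamma> 1 = (x::real^'n)"
proof -
  have "admissible_on 0 1 (\<lambda>t. (x - 1) + t *\<^sub>R 1) (\<lambda>t. 1::real^'n)"
    by (rule admissible_on_line) (auto simp: vec_eq_iff)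
  then show ?thesis
    using admissible_if_admissible_on by fastforce
qed

lemma exists_admissible_between:
  fixes x y :: "real^'n"
  assumes "cle x y" "x \<noteq> y"
  shows "\<exists>\<gamma>. admissible \<gamma> \<and> (\<forall>t\<in>{0..1}. cle x (\<gamma> t) \<and> cle (\<gamma> t) y)"
proof -
  have "admissible_on 0 1 (\<lambda>t. x + t *\<^sub>R (y - x)) (\<lambda>t. y - x)"
    by (rule admissible_on_line) (use assms in \<open>auto simp: cle_def\<close>)
  moreover have "cle x (x + t *\<^sub>R (y - x)) \<and> cle (x + t *\<^sub>R (y - x)) y" if "t \<in> {0..1}" for t
  proof -
    have "0 \<le> t * (y $ i - x $ i) \<and> t * (y $ i - x $ i) \<le> y $ i - x $ i" for i
      using assms(1) that unfolding cle_def by (simp add: mult_left_le_one_le)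
    then have "x $ i \<le> x $ i + t * (y $ i - x $ i) \<and> x $ i + t * (y $ i - x $ i) \<le> y $ i" for i
      by (smt (verit))
    then show ?thesis
      unfolding cle_def by simp
  qed
  ultimately show ?thesis
    using admissible_if_admissible_on by blast
qed

lemma Ufun_le:
  fixes x :: "real^'n"
  assumes "\<And>\<gamma>. admissible \<gamma> \<Longrightarrow> cle (\<gamma> 1) x \<Longrightarrow> Jfun f \<gamma> \<le> B"
  shows "Ufun f x \<le> B"
  unfolding Ufun_def using exists_admissible_ending_at[of x] assms
  by (intro cSup_least) (auto simp: cle_refl)

lemma wfun_le:
  fixes x y :: "real^'n"
  assumes "cle x y" "x \<noteq> y"
    and "\<And>\<gamma>. admissible \<gamma> \<Longrightarrow> \<forall>t\<in>{0..1}. cle x (\<gamma> t) \<and> cle (\<gamma> t) y \<Longrightarrow> Jfun f \<gamma> \<le> B"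
  shows "wfun f x y \<le> B"
  unfolding wfun_def if_P[OF assms(1)] using exists_admissible_between[OF assms(1,2)] assms
  by (intro cSup_least) auto

section \<open>Exit and entry times\<close>

text \<open>The open orthant below x is a neighbourhood of every point strictly below x.\<close>
lemma component_eq_if_islimpt_not_cle:
  fixes \<gamma> :: "real \<Rightarrow> real^'n"
  assumes cont: "continuous (at t0 within S) \<gamma>" and le: "cle (\<gamma> t0) x"
    and lim: "t0 islimpt {t \<in> S. \<not> cle (\<gamma> t) x}"
  shows "\<exists>j. \<gamma> t0 $ j = x $ j"
proof (rule ccontr)
  define Q where "Q = (\<Inter>i. {z::real^'n. z $ i < x $ i})"
  assume "\<nexists>j. \<gamma> t0 $ j = x $ j"
  with le have "\<gamma> t0 \<in> Q"
    unfolding Q_def cle_def by (auto simp: order.strict_iff_order)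
  moreover have "open Q"
    unfolding Q_def by (auto intro: open_halfspace_component_lt_cart)
  ultimately obtain A where A: "open A" "t0 \<in> A" "\<forall>t\<in>S. t \<in> A \<longrightarrow> \<gamma> t \<in> Q"
    using cont unfolding continuous_within_topological by metis
  then obtain t where "t \<in> S" "t \<in> A" "\<not> cle (\<gamma> t) x"
    using lim unfolding islimpt_def by blast
  with A(3) show False
    unfolding Q_def cle_def by (auto intro: less_imp_le)
qed

lemma component_eq_at_exit:
  fixes \<gamma> :: "real \<Rightarrow> real^'n"
  assumes cont: "continuous_on {a..b} \<gamma>" and t0: "a \<le> t0" "t0 < b"
    and le: "cle (\<gamma> t0) x" and after: "\<forall>t\<in>{t0<..b}. \<not> cle (\<gamma> t) x"
  shows "\<exists>j. \<gamma> t0 $ j = x $ j"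
proof (rule component_eq_if_islimpt_not_cle[of t0 "{a..b}" \<gamma> x, OF _ le])
  show "continuous (at t0 within {a..b}) \<gamma>"
    using cont t0 unfolding continuous_on_eq_continuous_within by simp
  have "t0 islimpt {t0<..b}"
    using t0 by simp
  then show "t0 islimpt {t \<in> {a..b}. \<not> cle (\<gamma> t) x}"
    by (rule islimpt_subset) (use t0 after in auto)
qed

lemma component_eq_at_entry:
  fixes \<gamma> :: "real \<Rightarrow> real^'n"
  assumes cont: "continuous_on {a..b} \<gamma>" and t0: "a < t0" "t0 \<le> b"
    and ge: "cle x (\<gamma> t0)" and before: "\<forall>t\<in>{a..<t0}. \<not> cle x (\<gamma> t)"
  shows "\<exists>j. \<gamma> t0 $ j = x $ j"
proof -
  have "\<exists>j. (- \<gamma> t0) $ j = (- x) $ j"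
  proof (rule component_eq_if_islimpt_not_cle[of t0 "{a..b}" "\<lambda>t. - \<gamma> t" "- x"])
    show "continuous (at t0 within {a..b}) (\<lambda>t. - \<gamma> t)"
      using cont t0 unfolding continuous_on_eq_continuous_within by (simp add: continuous_intros)
    show "cle (- \<gamma> t0) (- x)"
      using ge by (simp add: cle_uminus)
    have "t0 islimpt {a..<t0}"
      using t0 by simp
    then show "t0 islimpt {t \<in> {a..b}. \<not> cle (- \<gamma> t) (- x)}"
      by (rule islimpt_subset) (use t0 before in \<open>auto simp: cle_uminus\<close>)
  qed
  then show ?thesis by simp
qed

text \<open>t0 is the last time at which the curve lies below x; unless t0 = 0, the curve leaves
  the orthant there through a face, i.e. with one coordinate equal to that of x.\<close>
lemma exit_point:
  fixes \<gamma> \<gamma>' :: "real \<Rightarrow> real^'n"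
  assumes \<gamma>: "admissible_on 0 1 \<gamma> \<gamma>'" and e: "0 \<le> e" and end_le: "cle (\<gamma> 1) (x + e *\<^sub>R 1)"
  obtains t0 j where "0 \<le> t0" "t0 \<le> 1" "t0 = 0 \<or> cle (\<gamma> t0) x" "\<gamma> 1 $ j - \<gamma> t0 $ j \<le> e"
proof -
  define T where "T = {t \<in> {0..1}. \<gamma> t \<in> {z. cle z x}}"
  have end_j: "\<gamma> 1 $ j \<le> x $ j + e" for j
    using end_le unfolding cle_def by simp
  show thesis
  proof (cases "T = {}")
    case True
    then obtain j where "x $ j < \<gamma> 0 $ j"
      unfolding T_def cle_def by (auto simp: not_le)
    with end_j[of j] show thesis
      by (intro that[of 0 j]) auto
  next
    case False
    have "compact T"
      unfolding T_def by (intro compact_preimage_closed_Icc admissible_on_continuous[OF \<gamma>] closed_cle_below)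
    with False obtain t0 where t0: "t0 \<in> T" "\<forall>t\<in>T. t \<le> t0"
      using compact_attains_sup by blast
    then have t01: "0 \<le> t0" "t0 \<le> 1" and below: "cle (\<gamma> t0) x"
      unfolding T_def by auto
    show thesis
    proof (cases "t0 = 1")
      case True
      with t01 below e show thesis by (intro that[of t0 undefined]) auto
    next
      case False
      have "\<forall>t\<in>{t0<..1}. \<not> cle (\<gamma> t) x"
      proof (intro ballI notI)
        fix t assume t: "t \<in> {t0<..1}" and "cle (\<gamma> t) x"
        with t01 have "t \<in> T" unfolding T_def by auto
        with t0(2) t show False by fastforce
      qed
      moreover have "t0 < 1"
        using t01 False by simp
      ultimately obtain j where "\<gamma> t0 $ j = x $ j"
        using component_eq_at_exit[OF admissible_on_continuous[OF \<gamma>] t01(1) _ below] by blast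
      with end_j[of j] t01 below show thesis
        by (intro that[of t0 j]) auto
    qed
  qed
qed

lemma entry_point:
  fixes \<gamma> \<gamma>' :: "real \<Rightarrow> real^'n"
  assumes \<gamma>: "admissible_on 0 1 \<gamma> \<gamma>'" and e: "0 \<le> e" and start_ge: "cle (x - e *\<^sub>R 1) (\<gamma> 0)"
  obtains t0 j where "0 \<le> t0" "t0 \<le> 1" "t0 = 1 \<or> cle x (\<gamma> t0)" "\<gamma> t0 $ j - \<gamma> 0 $ j \<le> e"
proof -
  define T where "T = {t \<in> {0..1}. \<gamma> t \<in> {z. cle x z}}"
  have start_j: "x $ j - e \<le> \<gamma> 0 $ j" for j
    using start_ge unfolding cle_def by simp
  show thesis
  proof (cases "T = {}")
    case True
    then have "\<not> cle x (\<gamma> 1)"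
      unfolding T_def by auto
    then obtain j where "\<gamma> 1 $ j < x $ j"
      unfolding cle_def by (auto simp: not_le)
    with start_j[of j] show thesis
      by (intro that[of 1 j]) auto
  next
    case False
    have "compact T"
      unfolding T_def by (intro compact_preimage_closed_Icc admissible_on_continuous[OF \<gamma>] closed_cle_above)
    with False obtain t0 where t0: "t0 \<in> T" "\<forall>t\<in>T. t0 \<le> t"
      using compact_attains_inf by blast
    then have t01: "0 \<le> t0" "t0 \<le> 1" and above: "cle x (\<gamma> t0)"
      unfolding T_def by auto
    show thesis
    proof (cases "t0 = 0")
      case True
      with t01 above e show thesis by (intro that[of t0 undefined]) auto
    next
      case False
      have "\<forall>t\<in>{0..<t0}. \<not> cle x (\<gamma> t)"
      proof (intro ballI notI)
        fix t assume t: "t \<in> {0..<t0}" and "cle x (\<gamma> t)"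
        with t01 have "t \<in> T" unfolding T_def by auto
        with t0(2) t show False by fastforce
      qed
      moreover have "0 < t0"
        using t01 False by simp
      ultimately obtain j where "\<gamma> t0 $ j = x $ j"
        using component_eq_at_entry[OF admissible_on_continuous[OF \<gamma>] _ t01(2) above] by blast
      with start_j[of j] t01 above show thesis
        by (intro that[of t0 j]) auto
    qed
  qed
qed

section \<open>Connecting curves\<close>

lemma nonneg_blend_nonzero:
  fixes u v w :: "real^'n"
  assumes "\<forall>i. 0 \<le> v $ i" "v \<noteq> 0" "\<forall>i. 0 \<le> u $ i" "u \<noteq> 0" "\<forall>i. 0 \<le> w $ i"
    and "0 \<le> s" "s \<le> 1"
  shows "(\<forall>i. 0 \<le> ((1 - s) *\<^sub>R v + s *\<^sub>R u + w) $ i) \<and> (1 - s) *\<^sub>R v + s *\<^sub>R u + w \<noteq> 0"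
proof
  have nn: "0 \<le> (1 - s) * v $ i" "0 \<le> s * u $ i" "0 \<le> w $ i" for i
    using assms by auto
  have comp: "((1 - s) *\<^sub>R v + s *\<^sub>R u + w) $ i = (1 - s) * v $ i + s * u $ i + w $ i" for i
    by simp
  show "\<forall>i. 0 \<le> ((1 - s) *\<^sub>R v + s *\<^sub>R u + w) $ i"
    unfolding comp using nn by (simp add: add_nonneg_nonneg)
  obtain i where "0 < (1 - s) * v $ i \<or> 0 < s * u $ i"
  proof (cases "s = 1")
    case True
    obtain i where "u $ i \<noteq> 0" using assms(4) by (auto simp: vec_eq_iff)
    with True assms(3) show thesis by (intro that[of i]) (simp add: order_le_neq_trans)
  next
    case False
    obtain i where "v $ i \<noteq> 0" using assms(2) by (auto simp: vec_eq_iff)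
    with False assms(1,7) show thesis by (intro that[of i]) (simp add: order_le_neq_trans)
  qed
  with nn[of i] have "0 < ((1 - s) *\<^sub>R v + s *\<^sub>R u + w) $ i"
    unfolding comp by linarith
  then show "(1 - s) *\<^sub>R v + s *\<^sub>R u + w \<noteq> 0"
    by (metis order.irrefl zero_index)
qed

text \<open>The velocity interpolates linearly between v and u, plus a bump carrying the excess E;
  the bump integrates to E, which is why E must be componentwise nonnegative.\<close>
lemma hermite_connector:
  fixes p q u v :: "real^'n"
  assumes v: "\<forall>i. 0 \<le> v $ i" "v \<noteq> 0" and u: "\<forall>i. 0 \<le> u $ i" "u \<noteq> 0" and T: "0 < T"
    and excess: "\<forall>i. 0 \<le> (q - p - (T / 2) *\<^sub>R (u + v)) $ i"
  obtains c c' where "admissible_on a (a + T) c c'"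
    "c a = p" "c (a + T) = q" "c' a = v" "c' (a + T) = u"
proof -
  define E where "E = q - p - (T / 2) *\<^sub>R (u + v)"
  define \<phi>2 where "\<phi>2 t = (t - a)\<^sup>2 / (2 * T)" for t
  define \<phi>3 where "\<phi>3 t = 3 * (t - a)\<^sup>2 / T\<^sup>2 - 2 * (t - a) ^ 3 / T ^ 3" for t
  define \<psi>2 where "\<psi>2 t = (t - a) / T" for t
  define \<psi>3 where "\<psi>3 t = 6 * (t - a) / T\<^sup>2 - 6 * (t - a)\<^sup>2 / T ^ 3" for t
  define c where "c t = p + (t - a) *\<^sub>R v + \<phi>2 t *\<^sub>R (u - v) + \<phi>3 t *\<^sub>R E" for t
  define c' where "c' t = v + \<psi>2 t *\<^sub>R (u - v) + \<psi>3 t *\<^sub>R E" for t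
  have scaled: "((\<lambda>t. \<phi> t *\<^sub>R w) has_vector_derivative \<phi>' *\<^sub>R w) (at t)"
    if "(\<phi> has_real_derivative \<phi>') (at t)" for \<phi> \<phi>' t and w :: "real^'n"
    using has_vector_derivative_scaleR[OF that has_vector_derivative_const[of w]] by simp
  have "((\<lambda>t. t - a) has_real_derivative 1) (at t)" for t
    by (auto intro!: derivative_eq_intros)
  moreover have "(\<phi>2 has_real_derivative \<psi>2 t) (at t)" "(\<phi>3 has_real_derivative \<psi>3 t) (at t)" for t
    unfolding \<phi>2_def \<psi>2_def \<phi>3_def \<psi>3_def
    by (rule derivative_eq_intros refl | use T in \<open>simp add: field_simps power2_eq_square power3_eq_cube\<close>)+
  ultimately have "(c has_vector_derivative 0 + 1 *\<^sub>R v + \<psi>2 t *\<^sub>R (u - v) + \<psi>3 t *\<^sub>R E) (at t)" for t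
    unfolding c_def[abs_def] by (intro has_vector_derivative_add has_vector_derivative_const scaled)
  then have der: "(c has_vector_derivative c' t) (at t within S)" for t S
    unfolding c'_def by (simp add: has_vector_derivative_at_within)
  have c'_blend: "c' t = (1 - (t - a) / T) *\<^sub>R v + ((t - a) / T) *\<^sub>R u
      + (6 * (t - a) * (T - (t - a)) / T ^ 3) *\<^sub>R E" for t
    unfolding c'_def \<psi>2_def \<psi>3_def using T
    by (simp add: vec_eq_iff field_simps power2_eq_square power3_eq_cube)
  have "\<forall>i. 0 \<le> E $ i" using excess unfolding E_def .
  then have pos: "(\<forall>i. 0 \<le> c' t $ i) \<and> c' t \<noteq> 0" if "t \<in> {a..a + T}" for t
    unfolding c'_blend using that T
    by (intro nonneg_blend_nonzero v u) (auto simp: divide_simps)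
  have "continuous_on {a..a + T} c'"
    unfolding c'_def \<psi>2_def \<psi>3_def by (intro continuous_intros) (use T in auto)
  then have "admissible_on a (a + T) c c'"
    unfolding admissible_on_def using T der pos by auto
  moreover have "c (a + T) = q"
    unfolding c_def \<phi>2_def \<phi>3_def E_def using T
    by (simp add: vec_eq_iff field_simps power2_eq_square power3_eq_cube)
  moreover have "c a = p" "c' a = v"
    unfolding c_def c'_def \<phi>2_def \<phi>3_def \<psi>2_def \<psi>3_def by simp_all
  moreover have "c' (a + T) = u"
    unfolding c'_def \<psi>2_def \<psi>3_def using T by (simp add: power2_eq_square power3_eq_cube)
  ultimately show thesis using that by blast
qed

lemma exists_connector_time:
  fixes d w :: "real^'n"
  assumes "\<forall>i. 0 \<le> d $ i \<and> 0 \<le> w $ i \<and> (0 < w $ i \<longrightarrow> 0 < d $ i)"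
  obtains T where "0 < T" "\<forall>i. 0 \<le> (d - (T / 2) *\<^sub>R w) $ i"
proof -
  define \<rho> where "\<rho> i = (if 0 < w $ i then 2 * d $ i / w $ i else 1)" for i
  define T where "T = Min (range \<rho>)"
  have "0 < \<rho> i" for i
    unfolding \<rho>_def using assms by auto
  then have "0 < T"
    unfolding T_def by (subst Min_gr_iff) auto
  moreover have "(T / 2) * w $ i \<le> d $ i" for i
  proof (cases "0 < w $ i")
    case True
    have "T \<le> 2 * d $ i / w $ i"
      unfolding T_def using Min_le[of "range \<rho>" "\<rho> i"] True by (simp add: \<rho>_def)
    with True show ?thesis by (simp add: field_simps)
  next
    case False
    then have "w $ i = 0"
      using assms by (meson linorder_not_less order.antisym)
    with assms show ?thesis by simp
  qed
  ultimately show thesis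
    using that by simp
qed

lemma admissible_on_gap:
  fixes \<gamma> \<gamma>' \<eta> \<eta>' :: "real \<Rightarrow> real^'n"
  assumes \<gamma>: "admissible_on 0 1 \<gamma> \<gamma>'" and \<eta>: "admissible_on 0 1 \<eta> \<eta>'" and meet: "cle (\<gamma> 1) (\<eta> 0)"
    and a: "0 \<le> a" "a < 1" and \<tau>: "0 < \<tau>" "\<tau> \<le> 1"
  shows "0 \<le> (\<eta> \<tau> - \<gamma> a) $ i \<and> 0 \<le> (\<eta>' \<tau> + \<gamma>' a) $ i
    \<and> (0 < (\<eta>' \<tau> + \<gamma>' a) $ i \<longrightarrow> 0 < (\<eta> \<tau> - \<gamma> a) $ i)"
proof -
  have "\<gamma> a $ i \<le> \<gamma> 1 $ i" "\<gamma> 1 $ i \<le> \<eta> 0 $ i" "\<eta> 0 $ i \<le> \<eta> \<tau> $ i"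
    using admissible_on_cle[OF \<gamma>, of a 1] admissible_on_cle[OF \<eta>, of 0 \<tau>] meet a \<tau>
    unfolding cle_def by auto
  moreover have "0 < \<gamma>' a $ i \<Longrightarrow> \<gamma> a $ i < \<gamma> 1 $ i" "0 < \<eta>' \<tau> $ i \<Longrightarrow> \<eta> 0 $ i < \<eta> \<tau> $ i"
    using admissible_on_component_less[OF \<gamma>, of a 1 a] admissible_on_component_less[OF \<eta>, of 0 \<tau> \<tau>] a \<tau>
    by auto
  moreover have "0 \<le> \<gamma>' a $ i" "0 \<le> \<eta>' \<tau> $ i"
    using \<gamma> \<eta> a \<tau> unfolding admissible_on_def by auto
  ultimately show ?thesis
    by (smt (verit) vector_add_component vector_minus_component)
qed

lemma exists_small_time:
  assumes "0 < e" "0 \<le> K"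
  obtains \<tau> :: real where "0 < \<tau>" "\<tau> < 1" "K * \<tau> \<le> e"
proof
  define \<tau> where "\<tau> = min (1 / 2) (e / (K + 1))"
  show "0 < \<tau>" "\<tau> < 1"
    unfolding \<tau>_def using assms by auto
  have "K * \<tau> \<le> (K + 1) * (e / (K + 1))"
    unfolding \<tau>_def using assms by (intro mult_mono) auto
  then show "K * \<tau> \<le> e"
    using assms by simp
qed

section \<open>Bounded densities on the unit cube\<close>

locale cube_density =
  fixes f :: "real^'n \<Rightarrow> real" and M :: real
  assumes nonneg: "0 \<le> f x" and le_M: "f x \<le> M"
    and borel: "f \<in> borel_measurable borel"
    and support: "f x \<noteq> 0 \<Longrightarrow> x \<in> cbox 0 1"
begin

lemma root_le: "f x powr (1 / real CARD('n)) \<le> M powr (1 / real CARD('n))"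
  using nonneg le_M by (intro powr_mono2) auto

lemma J_on_integrable:
  assumes \<gamma>: "admissible_on a b \<gamma> \<gamma>'"
  shows "(\<lambda>t. f (\<gamma> t) powr (1 / real CARD('n)) * gmean (\<gamma>' t)) integrable_on {a..b}"
proof -
  obtain B where B: "\<forall>t\<in>{a..b}. gmean (\<gamma>' t) \<le> B"
    using admissible_on_gmean_bounded[OF \<gamma>] .
  show ?thesis
  proof (rule measurable_bounded_by_integrable_imp_integrable_real)
    have "\<gamma> \<in> borel_measurable (lebesgue_on {a..b})"
      using admissible_on_continuous[OF \<gamma>] by (intro continuous_imp_measurable_on_sets_lebesgue) auto
    then have "(\<lambda>t. f (\<gamma> t)) \<in> borel_measurable (lebesgue_on {a..b})"
      using measurable_compose borel by blast
    moreover have "(\<lambda>t. gmean (\<gamma>' t)) \<in> borel_measurable (lebesgue_on {a..b})"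
      using \<gamma> unfolding admissible_on_def
      by (intro continuous_imp_measurable_on_sets_lebesgue continuous_on_gmean) auto
    ultimately show "(\<lambda>t. f (\<gamma> t) powr (1 / real CARD('n)) * gmean (\<gamma>' t)) \<in> borel_measurable (lebesgue_on {a..b})"
      by measurable
    show "(\<lambda>t. M powr (1 / real CARD('n)) * B) integrable_on {a..b}"
      by (rule integrable_const_ivl)
    show "\<bar>f (\<gamma> t) powr (1 / real CARD('n)) * gmean (\<gamma>' t)\<bar> \<le> M powr (1 / real CARD('n)) * B"
      if "t \<in> {a..b}" for t
      using root_le[of "\<gamma> t"] B that gmean_nonneg[of "\<gamma>' t"] by (auto simp: abs_mult intro!: mult_mono)
  qed auto
qed

lemma J_on_additive:
  assumes "admissible_on a b \<gamma> \<gamma>'" "a \<le> s" "s \<le> b"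
  shows "J_on f \<gamma> \<gamma>' a b = J_on f \<gamma> \<gamma>' a s + J_on f \<gamma> \<gamma>' s b"
  unfolding J_on_def using Henstock_Kurzweil_Integration.integral_combine[OF assms(2,3) J_on_integrable[OF assms(1)]] by simp

lemma J_on_lipschitz:
  assumes \<gamma>: "admissible_on a b \<gamma> \<gamma>'"
  obtains K where "K \<ge> 0" "\<And>s t. a \<le> s \<Longrightarrow> s \<le> t \<Longrightarrow> t \<le> b \<Longrightarrow> J_on f \<gamma> \<gamma>' s t \<le> K * (t - s)"
proof -
  obtain B where B: "\<forall>t\<in>{a..b}. gmean (\<gamma>' t) \<le> B"
    using admissible_on_gmean_bounded[OF \<gamma>] .
  define K where "K = M powr (1 / real CARD('n)) * max B 0"
  have "J_on f \<gamma> \<gamma>' s t \<le> K * (t - s)" if st: "a \<le> s" "s \<le> t" "t \<le> b" for s t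
  proof -
    have "J_on f \<gamma> \<gamma>' s t \<le> integral {s..t} (\<lambda>_. K)"
      unfolding J_on_def
    proof (rule integral_le)
      show "(\<lambda>t. f (\<gamma> t) powr (1 / real CARD('n)) * gmean (\<gamma>' t)) integrable_on {s..t}"
        using st by (intro integrable_subinterval_real[OF J_on_integrable[OF \<gamma>]]) auto
      show "f (\<gamma> u) powr (1 / real CARD('n)) * gmean (\<gamma>' u) \<le> K" if "u \<in> {s..t}" for u
        unfolding K_def using root_le[of "\<gamma> u"] gmean_nonneg[of "\<gamma>' u"] B that st
        by (intro mult_mono) (auto simp: le_max_iff_disj)
    qed auto
    then show ?thesis using st by (simp add: mult.commute)
  qed
  moreover have "K \<ge> 0" unfolding K_def by simp
  ultimately show thesis using that by blast
qed

lemma J_on_glue: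
  assumes \<gamma>: "admissible_on a c \<gamma> \<gamma>'" and \<eta>: "admissible_on c b \<eta> \<eta>'"
    and "\<gamma> c = \<eta> c" "\<gamma>' c = \<eta>' c"
  shows "J_on f (\<lambda>t. if t \<le> c then \<gamma> t else \<eta> t) (\<lambda>t. if t \<le> c then \<gamma>' t else \<eta>' t) a b
       = J_on f \<gamma> \<gamma>' a c + J_on f \<eta> \<eta>' c b"
proof -
  have "a < c" "c < b" using \<gamma> \<eta> unfolding admissible_on_def by auto
  then have "J_on f (\<lambda>t. if t \<le> c then \<gamma> t else \<eta> t) (\<lambda>t. if t \<le> c then \<gamma>' t else \<eta>' t) a b
      = J_on f (\<lambda>t. if t \<le> c then \<gamma> t else \<eta> t) (\<lambda>t. if t \<le> c then \<gamma>' t else \<eta>' t) a c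
      + J_on f (\<lambda>t. if t \<le> c then \<gamma> t else \<eta> t) (\<lambda>t. if t \<le> c then \<gamma>' t else \<eta>' t) c b"
    by (intro J_on_additive admissible_on_glue[OF assms]) auto
  also have "\<dots> = J_on f \<gamma> \<gamma>' a c + J_on f \<eta> \<eta>' c b"
    unfolding J_on_def using assms(3,4) by (intro arg_cong2[where f="(+)"] integral_cong) auto
  finally show ?thesis .
qed

lemma J_on_le_weighted_sum:
  assumes \<gamma>: "admissible_on a b \<gamma> \<gamma>'" and st: "a \<le> s" "s \<le> t" "t \<le> b"
    and c: "\<forall>i. 0 < c i" "(\<Prod>i\<in>UNIV. c i) = 1"
  shows "J_on f \<gamma> \<gamma>' s t
    \<le> M powr (1 / real CARD('n)) / real CARD('n) * (\<Sum>i\<in>UNIV. c i * (\<gamma> t $ i - \<gamma> s $ i))"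
proof -
  define H where "H = M powr (1 / real CARD('n))"
  have "J_on f \<gamma> \<gamma>' s t \<le> integral {s..t} (\<lambda>u. H / real CARD('n) * (\<Sum>i\<in>UNIV. c i * \<gamma>' u $ i))"
    unfolding J_on_def
  proof (rule integral_le)
    show "(\<lambda>u. f (\<gamma> u) powr (1 / real CARD('n)) * gmean (\<gamma>' u)) integrable_on {s..t}"
      using st by (intro integrable_subinterval_real[OF J_on_integrable[OF \<gamma>]]) auto
    show "(\<lambda>u. H / real CARD('n) * (\<Sum>i\<in>UNIV. c i * \<gamma>' u $ i)) integrable_on {s..t}"
      using st by (intro integrable_on_mult_right has_integral_integrable[OF admissible_on_has_integral_weighted[OF \<gamma>]])
    fix u assume "u \<in> {s..t}"
    then have "\<forall>i. 0 \<le> \<gamma>' u $ i" using \<gamma> st unfolding admissible_on_def by auto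
    then have "gmean (\<gamma>' u) \<le> (\<Sum>i\<in>UNIV. c i * \<gamma>' u $ i) / real CARD('n)"
      using gmean_le_weighted_mean c by blast
    then have "H * gmean (\<gamma>' u) \<le> H * ((\<Sum>i\<in>UNIV. c i * \<gamma>' u $ i) / real CARD('n))"
      by (rule mult_left_mono) (simp add: H_def)
    moreover have "f (\<gamma> u) powr (1 / real CARD('n)) * gmean (\<gamma>' u) \<le> H * gmean (\<gamma>' u)"
      unfolding H_def by (rule mult_right_mono[OF root_le gmean_nonneg])
    ultimately show "f (\<gamma> u) powr (1 / real CARD('n)) * gmean (\<gamma>' u)
        \<le> H / real CARD('n) * (\<Sum>i\<in>UNIV. c i * \<gamma>' u $ i)"
      by simp
  qed
  also have "\<dots> = H / real CARD('n) * (\<Sum>i\<in>UNIV. c i * (\<gamma> t $ i - \<gamma> s $ i))"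
    using st by (intro integral_unique has_integral_mult_right admissible_on_has_integral_weighted[OF \<gamma>])
  finally show ?thesis unfolding H_def .
qed

text \<open>f vanishes off the cube, and a monotone curve meets the cube in a parameter interval.\<close>
lemma J_on_le_weighted_increment:
  assumes \<gamma>: "admissible_on a b \<gamma> \<gamma>'" and st: "a \<le> s" "s \<le> t" "t \<le> b"
    and c: "\<forall>i. 0 < c i" "(\<Prod>i\<in>UNIV. c i) = 1" and \<delta>: "\<forall>i. 0 \<le> \<delta> i"
    and incr: "\<And>i u v. s \<le> u \<Longrightarrow> u \<le> v \<Longrightarrow> v \<le> t \<Longrightarrow> \<gamma> u \<in> cbox 0 1 \<Longrightarrow> \<gamma> v \<in> cbox 0 1
        \<Longrightarrow> \<gamma> v $ i - \<gamma> u $ i \<le> \<delta> i"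
  shows "J_on f \<gamma> \<gamma>' s t \<le> M powr (1 / real CARD('n)) * (\<Sum>i\<in>UNIV. c i * \<delta> i) / real CARD('n)"
proof -
  define T where "T = {u \<in> {s..t}. \<gamma> u \<in> cbox 0 1}"
  have "J_on f \<gamma> \<gamma>' s t = integral {s..t}
      (\<lambda>u. if u \<in> T then f (\<gamma> u) powr (1 / real CARD('n)) * gmean (\<gamma>' u) else 0)"
    unfolding J_on_def T_def by (rule integral_cong) (auto dest: support)
  also have "\<dots> = integral T (\<lambda>u. f (\<gamma> u) powr (1 / real CARD('n)) * gmean (\<gamma>' u))"
    unfolding integral_restrict_Int by (rule arg_cong2[where f=integral]) (auto simp: T_def)
  also have "\<dots> \<le> M powr (1 / real CARD('n)) * (\<Sum>i\<in>UNIV. c i * \<delta> i) / real CARD('n)"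
  proof (cases rule: admissible_on_preimage_cbox[OF \<gamma> st(1,3), of 0 1])
    case 1
    then have "T = {}" unfolding T_def .
    moreover have "0 \<le> (\<Sum>i\<in>UNIV. c i * \<delta> i)"
      using c \<delta> by (simp add: sum_nonneg less_imp_le)
    ultimately show ?thesis by simp
  next
    case (2 t1 t2)
    have T12: "T = {t1..t2}"
      using 2(4) unfolding T_def .
    then have "t1 \<in> T" "t2 \<in> T"
      using 2(2) by auto
    then have "\<gamma> t1 \<in> cbox 0 1" "\<gamma> t2 \<in> cbox 0 1"
      unfolding T_def by auto
    then have "\<gamma> t2 $ i - \<gamma> t1 $ i \<le> \<delta> i" for i
      using 2(1-3) by (intro incr) auto
    then have "(\<Sum>i\<in>UNIV. c i * (\<gamma> t2 $ i - \<gamma> t1 $ i)) \<le> (\<Sum>i\<in>UNIV. c i * \<delta> i)"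
      using c by (intro sum_mono mult_left_mono) (auto simp: less_imp_le)
    then have "M powr (1 / real CARD('n)) / real CARD('n) * (\<Sum>i\<in>UNIV. c i * (\<gamma> t2 $ i - \<gamma> t1 $ i))
        \<le> M powr (1 / real CARD('n)) / real CARD('n) * (\<Sum>i\<in>UNIV. c i * \<delta> i)"
      by (rule mult_left_mono) simp
    moreover have "J_on f \<gamma> \<gamma>' t1 t2
        \<le> M powr (1 / real CARD('n)) / real CARD('n) * (\<Sum>i\<in>UNIV. c i * (\<gamma> t2 $ i - \<gamma> t1 $ i))"
      using 2(1-3) st by (intro J_on_le_weighted_sum[OF \<gamma> _ _ _ c]) auto
    ultimately have "J_on f \<gamma> \<gamma>' t1 t2
        \<le> M powr (1 / real CARD('n)) / real CARD('n) * (\<Sum>i\<in>UNIV. c i * \<delta> i)"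
      by (rule order_trans[rotated])
    then show ?thesis
      unfolding J_on_def T12 by simp
  qed
  finally show ?thesis .
qed

lemma J_on_le_root_M:
  assumes "admissible_on a b \<gamma> \<gamma>'" "a \<le> s" "s \<le> t" "t \<le> b"
  shows "J_on f \<gamma> \<gamma>' s t \<le> M powr (1 / real CARD('n))"
  using J_on_le_weighted_increment[OF assms, of "\<lambda>_. 1" "\<lambda>_. 1"]
  by (simp add: cube_component_increment)

text \<open>The weights e^(1/d) / \<delta> i with \<delta> j = e and \<delta> i = 1 otherwise balance the short side
  of the box against the unit sides.\<close>
lemma J_on_le_if_component_increment:
  assumes \<gamma>: "admissible_on a b \<gamma> \<gamma>'" and st: "a \<le> s" "s \<le> t" "t \<le> b"
    and e: "0 < e" and j: "\<gamma> t $ j - \<gamma> s $ j \<le> e"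
  shows "J_on f \<gamma> \<gamma>' s t \<le> M powr (1 / real CARD('n)) * e powr (1 / real CARD('n))"
proof -
  define \<delta> where "\<delta> i = (if i = j then e else 1)" for i
  define p where "p = e powr (1 / real CARD('n))"
  have \<delta>0: "\<delta> i > 0" for i unfolding \<delta>_def using e by simp
  have "p ^ CARD('n) = e"
    unfolding p_def using e by (simp add: powr_realpow[symmetric] powr_powr)
  then have "(\<Prod>i\<in>UNIV. p / \<delta> i) = 1"
    using e by (simp add: prod_dividef \<delta>_def prod.delta)
  then have "J_on f \<gamma> \<gamma>' s t \<le> M powr (1 / real CARD('n)) * (\<Sum>i\<in>UNIV. p / \<delta> i * \<delta> i) / real CARD('n)"
  proof (rule J_on_le_weighted_increment[OF \<gamma> st, rotated])
    show "\<forall>i. 0 < p / \<delta> i" "\<forall>i. 0 \<le> \<delta> i"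
      using \<delta>0 e by (auto simp: p_def less_imp_le)
    fix i u v assume uv: "s \<le> u" "u \<le> v" "v \<le> t" "\<gamma> u \<in> cbox 0 1" "\<gamma> v \<in> cbox 0 1"
    show "\<gamma> v $ i - \<gamma> u $ i \<le> \<delta> i"
    proof (cases "i = j")
      case True
      have "cle (\<gamma> s) (\<gamma> u)" "cle (\<gamma> v) (\<gamma> t)"
        using uv st by (auto intro!: admissible_on_cle[OF \<gamma>])
      with j True show ?thesis unfolding cle_def \<delta>_def by (smt (verit))
    qed (use uv cube_component_increment in \<open>auto simp: \<delta>_def\<close>)
  qed
  also have "(\<Sum>i\<in>UNIV. p / \<delta> i * \<delta> i) = real CARD('n) * p"
    using \<delta>0 by (simp add: less_imp_neq[symmetric])
  finally show ?thesis unfolding p_def by simp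
qed

lemma Jfun_le_root_M: "admissible \<gamma> \<Longrightarrow> Jfun f \<gamma> \<le> M powr (1 / real CARD('n))"
  by (metis admissibleE Jfun_eq_J_on J_on_le_root_M order_refl zero_le_one)

lemma Ufun_ge:
  assumes "admissible \<gamma>" "cle (\<gamma> 1) x"
  shows "Jfun f \<gamma> \<le> Ufun f x"
  unfolding Ufun_def using assms Jfun_le_root_M
  by (intro cSup_upper) (auto simp: bdd_above_def)

lemma wfun_ge:
  assumes "admissible \<gamma>" "\<forall>t\<in>{0..1}. cle x (\<gamma> t) \<and> cle (\<gamma> t) y"
  shows "Jfun f \<gamma> \<le> wfun f x y"
proof -
  have "cle x y"
    using assms(2) cle_trans by fastforce
  then show ?thesis
    unfolding wfun_def if_P[OF \<open>cle x y\<close>] using assms Jfun_le_root_M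
    by (intro cSup_upper) (auto simp: bdd_above_def)
qed

lemma Ufun_nonneg: "0 \<le> Ufun f x"
  using exists_admissible_ending_at[of x] Jfun_nonneg Ufun_ge cle_refl by (metis order_trans)

lemma wfun_nonneg:
  assumes "x \<noteq> y"
  shows "0 \<le> wfun f x y"
proof (cases "cle x y")
  case True
  then show ?thesis
    using exists_admissible_between[OF True assms] Jfun_nonneg wfun_ge by (metis order_trans)
qed (simp add: wfun_def)

lemma Ufun_mono: "cle x x' \<Longrightarrow> Ufun f x \<le> Ufun f x'"
  by (rule Ufun_le) (auto intro: Ufun_ge cle_trans)

lemma wfun_antimono:
  assumes "cle x x'" "cle x' y" "x' \<noteq> y"
  shows "wfun f x' y \<le> wfun f x y"
  using assms by (intro wfun_le) (auto intro!: wfun_ge intro: cle_trans)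

lemma J_on_le_Ufun:
  assumes \<gamma>: "admissible_on a b \<gamma> \<gamma>'" and "a < c" "c \<le> b" "cle (\<gamma> c) x"
  shows "J_on f \<gamma> \<gamma>' a c \<le> Ufun f x"
proof -
  obtain \<eta> \<eta>' where \<eta>: "admissible_on 0 1 \<eta> \<eta>'" "J_on f \<eta> \<eta>' 0 1 = J_on f \<gamma> \<gamma>' a c" "\<eta> 1 = \<gamma> c"
    using admissible_on_rescale_01[OF admissible_on_subinterval[OF \<gamma> order_refl assms(2,3)]] by metis
  then show ?thesis
    using Ufun_ge[OF admissible_if_admissible_on[OF \<eta>(1)]] assms(4) by (simp add: Jfun_eq_J_on)
qed

lemma J_on_le_wfun:
  assumes \<gamma>: "admissible_on a b \<gamma> \<gamma>'" and "a \<le> c" "c < b"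
    and box: "\<forall>t\<in>{c..b}. cle x (\<gamma> t) \<and> cle (\<gamma> t) y"
  shows "J_on f \<gamma> \<gamma>' c b \<le> wfun f x y"
proof -
  obtain \<eta> \<eta>' where \<eta>: "admissible_on 0 1 \<eta> \<eta>'" "J_on f \<eta> \<eta>' 0 1 = J_on f \<gamma> \<gamma>' c b"
      "\<eta> ` {0..1} = \<gamma> ` {c..b}"
    using admissible_on_rescale_01[OF admissible_on_subinterval[OF \<gamma> assms(2,3) order_refl]] by metis
  then have "\<forall>t\<in>{0..1}. cle x (\<eta> t) \<and> cle (\<eta> t) y"
    using box by (metis (no_types, lifting) image_iff)
  then show ?thesis
    using wfun_ge[OF admissible_if_admissible_on[OF \<eta>(1)]] \<eta>(2) by (simp add: Jfun_eq_J_on[OF \<eta>(1)])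
qed

subsection \<open>Hoelder continuity of U and w\<close>

lemma Ufun_shift:
  assumes e: "0 < e"
  shows "Ufun f (x + e *\<^sub>R 1) \<le> Ufun f x + M powr (1 / real CARD('n)) * e powr (1 / real CARD('n))"
proof (rule Ufun_le)
  fix \<gamma> :: "real \<Rightarrow> real^'n" assume \<gamma>: "admissible \<gamma>" "cle (\<gamma> 1) (x + e *\<^sub>R 1)"
  obtain \<gamma>' where \<gamma>': "admissible_on 0 1 \<gamma> \<gamma>'"
    using admissibleE[OF \<gamma>(1)] .
  obtain t0 j where t0: "0 \<le> t0" "t0 \<le> 1" "t0 = 0 \<or> cle (\<gamma> t0) x" "\<gamma> 1 $ j - \<gamma> t0 $ j \<le> e"
    using exit_point[OF \<gamma>' _ \<gamma>(2)] e by auto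
  have "J_on f \<gamma> \<gamma>' 0 t0 \<le> Ufun f x"
  proof (cases "t0 = 0")
    case True
    then show ?thesis by (simp add: J_on_def Ufun_nonneg)
  qed (use t0 in \<open>auto intro: J_on_le_Ufun[OF \<gamma>']\<close>)
  moreover have "J_on f \<gamma> \<gamma>' t0 1 \<le> M powr (1 / real CARD('n)) * e powr (1 / real CARD('n))"
    using t0 e by (intro J_on_le_if_component_increment[OF \<gamma>']) auto
  ultimately show "Jfun f \<gamma> \<le> Ufun f x + M powr (1 / real CARD('n)) * e powr (1 / real CARD('n))"
    using J_on_additive[OF \<gamma>' t0(1,2)] Jfun_eq_J_on[OF \<gamma>'] by simp
qed

lemma wfun_shift:
  assumes xy: "cle x y" "x \<noteq> y" and e: "0 < e"
  shows "wfun f (x - e *\<^sub>R 1) y \<le> wfun f x y + M powr (1 / real CARD('n)) * e powr (1 / real CARD('n))"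
proof (rule wfun_le)
  have "(x - e *\<^sub>R 1) $ i < y $ i" for i
  proof -
    have "x $ i \<le> y $ i" using xy(1) unfolding cle_def by simp
    with e show ?thesis by simp
  qed
  then show "cle (x - e *\<^sub>R 1) y" "x - e *\<^sub>R 1 \<noteq> y"
    unfolding cle_def by (auto intro: less_imp_le)
  fix \<gamma> :: "real \<Rightarrow> real^'n"
  assume \<gamma>: "admissible \<gamma>" and box: "\<forall>t\<in>{0..1}. cle (x - e *\<^sub>R 1) (\<gamma> t) \<and> cle (\<gamma> t) y"
  obtain \<gamma>' where \<gamma>': "admissible_on 0 1 \<gamma> \<gamma>'"
    using admissibleE[OF \<gamma>] .
  obtain t0 j where t0: "0 \<le> t0" "t0 \<le> 1" "t0 = 1 \<or> cle x (\<gamma> t0)" "\<gamma> t0 $ j - \<gamma> 0 $ j \<le> e"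
    using entry_point[OF \<gamma>', of e x] e box by auto
  have "J_on f \<gamma> \<gamma>' t0 1 \<le> wfun f x y"
  proof (cases "t0 = 1")
    case True
    then show ?thesis by (simp add: J_on_def wfun_nonneg xy(2))
  next
    case False
    with t0(3) have "cle x (\<gamma> t0)" by simp
    then have "\<forall>t\<in>{t0..1}. cle x (\<gamma> t) \<and> cle (\<gamma> t) y"
      using t0(1) box cle_trans admissible_on_cle[OF \<gamma>', of t0] by (metis atLeastAtMost_iff order_trans)
    with False t0 show ?thesis
      by (intro J_on_le_wfun[OF \<gamma>']) auto
  qed
  moreover have "J_on f \<gamma> \<gamma>' 0 t0 \<le> M powr (1 / real CARD('n)) * e powr (1 / real CARD('n))"
    using t0 e by (intro J_on_le_if_component_increment[OF \<gamma>']) auto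
  ultimately show "Jfun f \<gamma> \<le> wfun f x y + M powr (1 / real CARD('n)) * e powr (1 / real CARD('n))"
    using J_on_additive[OF \<gamma>' t0(1,2)] Jfun_eq_J_on[OF \<gamma>'] by simp
qed

lemma Ufun_hoelder:
  assumes "0 < e" "norm (x - x') \<le> e"
  shows "\<bar>Ufun f x - Ufun f x'\<bar> \<le> M powr (1 / real CARD('n)) * e powr (1 / real CARD('n))"
proof -
  have "norm (x' - x) \<le> e"
    using assms(2) by (simp add: norm_minus_commute)
  then have "Ufun f x' \<le> Ufun f (x + e *\<^sub>R 1)" "Ufun f x \<le> Ufun f (x' + e *\<^sub>R 1)"
    using assms(2) by (auto intro: Ufun_mono cle_shift_if_norm_le)
  with Ufun_shift[OF assms(1), of x] Ufun_shift[OF assms(1), of x'] show ?thesis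
    by linarith
qed

lemma wfun_hoelder:
  assumes "0 < e" "norm (x - x') \<le> e"
    and "cle x y" "x \<noteq> y" "cle x' y" "x' \<noteq> y"
  shows "\<bar>wfun f x y - wfun f x' y\<bar> \<le> M powr (1 / real CARD('n)) * e powr (1 / real CARD('n))"
proof -
  have "norm (x' - x) \<le> e"
    using assms(2) by (simp add: norm_minus_commute)
  then have "wfun f x' y \<le> wfun f (x - e *\<^sub>R 1) y" "wfun f x y \<le> wfun f (x' - e *\<^sub>R 1) y"
    using assms by (auto intro!: wfun_antimono cle_shift_if_norm_le)
  with wfun_shift[OF assms(3,4,1)] wfun_shift[OF assms(5,6,1)] show ?thesis
    by linarith
qed

lemma continuous_on_Ufun_plus_wfun:
  "continuous_on {x. cle x y \<and> x \<noteq> y} (\<lambda>x. Ufun f x + wfun f x y)"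
  unfolding continuous_on_iff
proof (intro ballI allI impI)
  fix x and \<epsilon> :: real assume x: "x \<in> {x. cle x y \<and> x \<noteq> y}" and \<epsilon>: "0 < \<epsilon>"
  define H where "H = M powr (1 / real CARD('n))"
  define a where "a = \<epsilon> / (2 * H + 1)"
  define e where "e = a powr real CARD('n)"
  have H: "0 \<le> H" unfolding H_def by simp
  then have a: "0 < a" "2 * (H * a) < \<epsilon>"
    unfolding a_def using \<epsilon> by (simp_all add: field_simps)
  then have e: "0 < e" "e powr (1 / real CARD('n)) = a"
    unfolding e_def by (simp_all add: powr_powr)
  show "\<exists>\<delta>>0. \<forall>x'\<in>{x. cle x y \<and> x \<noteq> y}. dist x' x < \<delta> \<longrightarrow>
      dist (Ufun f x' + wfun f x' y) (Ufun f x + wfun f x y) < \<epsilon>"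
  proof (intro exI[of _ e] conjI e ballI impI)
    fix x' assume x': "x' \<in> {x. cle x y \<and> x \<noteq> y}" and "dist x' x < e"
    then have "norm (x - x') \<le> e"
      by (simp add: dist_norm norm_minus_commute)
    then have "\<bar>Ufun f x - Ufun f x'\<bar> \<le> H * a" "\<bar>wfun f x y - wfun f x' y\<bar> \<le> H * a"
      using Ufun_hoelder wfun_hoelder x x' e unfolding H_def by auto
    with a show "dist (Ufun f x' + wfun f x' y) (Ufun f x + wfun f x y) < \<epsilon>"
      unfolding dist_real_def by linarith
  qed
qed

subsection \<open>The dynamic programming principle\<close>

lemma J_on_le_split:
  assumes \<gamma>: "admissible_on 0 1 \<gamma> \<gamma>'" and s: "0 < s" "s < 1" and "cle (\<gamma> 1) y"
  shows "J_on f \<gamma> \<gamma>' 0 1 \<le> Ufun f (\<gamma> s) + wfun f (\<gamma> s) y"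
proof -
  have "cle (\<gamma> s) (\<gamma> t) \<and> cle (\<gamma> t) y" if "t \<in> {s..1}" for t
  proof -
    have "cle (\<gamma> s) (\<gamma> t)" "cle (\<gamma> t) (\<gamma> 1)"
      using that s by (auto intro!: admissible_on_cle[OF \<gamma>])
    then show ?thesis
      using assms(4) cle_trans by blast
  qed
  then have "J_on f \<gamma> \<gamma>' 0 s \<le> Ufun f (\<gamma> s)" "J_on f \<gamma> \<gamma>' s 1 \<le> wfun f (\<gamma> s) y"
    using s cle_refl by (auto intro!: J_on_le_Ufun[OF \<gamma>] J_on_le_wfun[OF \<gamma>])
  then show ?thesis
    using J_on_additive[OF \<gamma>, of s] s by simp
qed

lemma sphere_point_dominating_curve:
  fixes \<gamma> :: "real \<Rightarrow> real^'n"
  assumes r: "0 < r" and \<gamma>: "admissible \<gamma>" "cle (\<gamma> 1) y"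
  obtains x where "dist y x = r" "cle x y" "Jfun f \<gamma> \<le> Ufun f x + wfun f x y"
proof -
  obtain \<gamma>' where \<gamma>': "admissible_on 0 1 \<gamma> \<gamma>'"
    using admissibleE[OF \<gamma>(1)] .
  have mono: "cle (\<gamma> s) (\<gamma> t)" if "0 \<le> s" "s \<le> t" "t \<le> 1" for s t
    using admissible_on_cle[OF \<gamma>' that] .
  have below_y: "cle (\<gamma> t) y" if "t \<in> {0..1}" for t
    using mono[of t 1] that \<gamma>(2) cle_trans by auto
  have x_ne_y: "x \<noteq> y" if "dist y x = r" for x
    using that r by auto
  consider "r \<le> dist y (\<gamma> 1)" | "dist y (\<gamma> 0) \<le> r" | "dist y (\<gamma> 1) < r" "r < dist y (\<gamma> 0)"
    by linarith
  then show thesis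
  proof cases
    case 1
    then obtain x where x: "dist y x = r" "cle (\<gamma> 1) x" "cle x y"
      using sphere_point_between[OF \<gamma>(2) r] by blast
    then show thesis
      using Ufun_ge[OF \<gamma>(1) x(2)] wfun_nonneg[OF x_ne_y[OF x(1)]] by (intro that[of x]) auto
  next
    case 2
    then obtain x where x: "dist y x = r" "cle x (\<gamma> 0)"
      using sphere_point_below[OF below_y[of 0]] by auto
    then have box: "\<forall>t\<in>{0..1}. cle x (\<gamma> t) \<and> cle (\<gamma> t) y"
      using mono[of 0] below_y cle_trans by (metis atLeastAtMost_iff order_refl)
    then have "cle x y"
      using cle_trans by fastforce
    with x show thesis
      using wfun_ge[OF \<gamma>(1) box] Ufun_nonneg[of x] by (intro that[of x]) auto
  next
    case 3
    have "continuous_on {0..1} (\<lambda>t. dist y (\<gamma> t))"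
      using admissible_on_continuous[OF \<gamma>'] by (intro continuous_intros)
    then obtain s where s: "0 \<le> s" "s \<le> 1" "dist y (\<gamma> s) = r"
      using IVT2'[of "\<lambda>t. dist y (\<gamma> t)" 1 r 0] 3 by auto
    with 3 have "0 < s" "s < 1"
      by (auto simp: order.strict_iff_order)
    then show thesis
      using s below_y J_on_le_split[OF \<gamma>' _ _ \<gamma>(2)] Jfun_eq_J_on[OF \<gamma>']
      by (intro that[of "\<gamma> s"]) auto
  qed
qed

lemma J_on_glue3_le_Ufun:
  assumes \<gamma>: "admissible_on 0 a \<gamma> \<gamma>'" and c: "admissible_on a b c c'" and \<eta>: "admissible_on s 1 \<eta> \<eta>'"
    and "\<gamma> a = c a" "\<gamma>' a = c' a" "c b = \<eta> s" "c' b = \<eta>' s" and "cle (\<eta> 1) y"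
  shows "J_on f \<gamma> \<gamma>' 0 a + J_on f \<eta> \<eta>' s 1 \<le> Ufun f y"
proof -
  define k where "k = s - b"
  define G1 where "G1 t = (if t \<le> a then \<gamma> t else c t)" for t
  define G1' where "G1' t = (if t \<le> a then \<gamma>' t else c' t)" for t
  define G2 where "G2 t = (if t \<le> b then G1 t else \<eta> (t + k))" for t
  define G2' where "G2' t = (if t \<le> b then G1' t else \<eta>' (t + k))" for t
  have \<eta>_shift: "admissible_on b (1 - k) (\<lambda>t. \<eta> (t + k)) (\<lambda>t. \<eta>' (t + k))"
    using admissible_on_shift[OF \<eta>, of k] by (simp add: k_def)
  have ab: "a < b" "b < 1 - k" "0 < 1 - k"
    using \<gamma> c \<eta>_shift unfolding admissible_on_def by auto
  have G1: "admissible_on 0 b G1 G1'" "J_on f G1 G1' 0 b = J_on f \<gamma> \<gamma>' 0 a + J_on f c c' a b"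
    unfolding G1_def[abs_def] G1'_def[abs_def] using assms
    by (auto intro: admissible_on_glue J_on_glue)
  have "G1 b = \<eta> (b + k)" "G1' b = \<eta>' (b + k)"
    using ab assms unfolding G1_def G1'_def k_def by auto
  then have G2: "admissible_on 0 (1 - k) G2 G2'"
    "J_on f G2 G2' 0 (1 - k) = J_on f G1 G1' 0 b + J_on f (\<lambda>t. \<eta> (t + k)) (\<lambda>t. \<eta>' (t + k)) b (1 - k)"
    unfolding G2_def[abs_def] G2'_def[abs_def]
    by (auto intro: admissible_on_glue[OF G1(1) \<eta>_shift] J_on_glue[OF G1(1) \<eta>_shift])
  moreover have "cle (G2 (1 - k)) y"
    using ab assms unfolding G2_def by simp
  ultimately have "J_on f G2 G2' 0 (1 - k) \<le> Ufun f y"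
    using ab by (intro J_on_le_Ufun) auto
  moreover have "J_on f (\<lambda>t. \<eta> (t + k)) (\<lambda>t. \<eta>' (t + k)) b (1 - k) = J_on f \<eta> \<eta>' s 1"
    using J_on_shift[OF \<eta>, where k=k and f=f] by (simp add: k_def)
  ultimately show ?thesis
    using G1(2) G2(2) J_on_nonneg[of f c c' a b] by linarith
qed

lemma J_on_concat_le_Ufun:
  fixes \<gamma> \<gamma>' \<eta> \<eta>' :: "real \<Rightarrow> real^'n"
  assumes \<gamma>: "admissible_on 0 1 \<gamma> \<gamma>'" and \<eta>: "admissible_on 0 1 \<eta> \<eta>'"
    and meet: "cle (\<gamma> 1) (\<eta> 0)" and end_le: "cle (\<eta> 1) y" and e: "0 < e"
  shows "J_on f \<gamma> \<gamma>' 0 1 + J_on f \<eta> \<eta>' 0 1 \<le> Ufun f y + e"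
proof -
  obtain K1 where K1: "K1 \<ge> 0" "\<And>s t. 0 \<le> s \<Longrightarrow> s \<le> t \<Longrightarrow> t \<le> 1 \<Longrightarrow> J_on f \<gamma> \<gamma>' s t \<le> K1 * (t - s)"
    using J_on_lipschitz[OF \<gamma>] by blast
  obtain K2 where K2: "K2 \<ge> 0" "\<And>s t. 0 \<le> s \<Longrightarrow> s \<le> t \<Longrightarrow> t \<le> 1 \<Longrightarrow> J_on f \<eta> \<eta>' s t \<le> K2 * (t - s)"
    using J_on_lipschitz[OF \<eta>] by blast
  obtain \<tau> where \<tau>: "0 < \<tau>" "\<tau> < 1" "max K1 K2 * \<tau> \<le> e / 2"
    using exists_small_time[of "e / 2" "max K1 K2"] e K1(1) by (auto simp: le_max_iff_disj)
  moreover have "K1 * \<tau> \<le> max K1 K2 * \<tau>" "K2 * \<tau> \<le> max K1 K2 * \<tau>"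
    using \<tau>(1) by (simp_all add: mult_right_mono)
  ultimately have small: "K1 * \<tau> \<le> e / 2" "K2 * \<tau> \<le> e / 2"
    by linarith+
  define a where "a = 1 - \<tau>"
  have a: "0 < a" "a < 1"
    unfolding a_def using \<tau> by auto
  have "J_on f \<gamma> \<gamma>' a 1 \<le> e / 2" "J_on f \<eta> \<eta>' 0 \<tau> \<le> e / 2"
    using K1(2)[of a 1] K2(2)[of 0 \<tau>] small a \<tau> by (simp_all add: a_def mult.commute)
  moreover have "J_on f \<gamma> \<gamma>' 0 1 = J_on f \<gamma> \<gamma>' 0 a + J_on f \<gamma> \<gamma>' a 1"
    "J_on f \<eta> \<eta>' 0 1 = J_on f \<eta> \<eta>' 0 \<tau> + J_on f \<eta> \<eta>' \<tau> 1"
    using J_on_additive[OF \<gamma>, of a] J_on_additive[OF \<eta>, of \<tau>] a \<tau> by auto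
  moreover obtain T where T: "0 < T" "\<forall>i. 0 \<le> (\<eta> \<tau> - \<gamma> a - (T / 2) *\<^sub>R (\<eta>' \<tau> + \<gamma>' a)) $ i"
    using exists_connector_time admissible_on_gap[OF \<gamma> \<eta> meet] a \<tau> by (metis less_imp_le order_refl)
  have "\<forall>i. 0 \<le> \<gamma>' a $ i" "\<gamma>' a \<noteq> 0" "\<forall>i. 0 \<le> \<eta>' \<tau> $ i" "\<eta>' \<tau> \<noteq> 0"
    using \<gamma> \<eta> a \<tau> unfolding admissible_on_def by auto
  then obtain c c' where c: "admissible_on a (a + T) c c'"
    "c a = \<gamma> a" "c (a + T) = \<eta> \<tau>" "c' a = \<gamma>' a" "c' (a + T) = \<eta>' \<tau>"
    using hermite_connector[OF _ _ _ _ T] by metis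
  have "J_on f \<gamma> \<gamma>' 0 a + J_on f \<eta> \<eta>' \<tau> 1 \<le> Ufun f y"
    using a \<tau> c end_le
    by (intro J_on_glue3_le_Ufun[OF _ c(1)] admissible_on_subinterval[OF \<gamma>] admissible_on_subinterval[OF \<eta>]) auto
  ultimately show ?thesis
    by linarith
qed

lemma Ufun_plus_wfun_le:
  assumes xy: "cle x y" "x \<noteq> y"
  shows "Ufun f x + wfun f x y \<le> Ufun f y"
proof -
  have key: "Jfun f \<gamma> + Jfun f \<eta> \<le> Ufun f y"
    if \<gamma>: "admissible \<gamma>" "cle (\<gamma> 1) x" and \<eta>: "admissible \<eta>" "\<forall>t\<in>{0..1}. cle x (\<eta> t) \<and> cle (\<eta> t) y"
    for \<gamma> \<eta> :: "real \<Rightarrow> real^'n"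
  proof -
    obtain \<gamma>' \<eta>' where \<gamma>': "admissible_on 0 1 \<gamma> \<gamma>'" and \<eta>': "admissible_on 0 1 \<eta> \<eta>'"
      using admissibleE[OF \<gamma>(1)] admissibleE[OF \<eta>(1)] by metis
    have "cle x (\<eta> 0)" "cle (\<eta> 1) y"
      using \<eta>(2) by auto
    then have "cle (\<gamma> 1) (\<eta> 0)" "cle (\<eta> 1) y"
      using \<gamma>(2) cle_trans by blast+
    then show ?thesis
      using J_on_concat_le_Ufun[OF \<gamma>' \<eta>'] field_le_epsilon
      unfolding Jfun_eq_J_on[OF \<gamma>'] Jfun_eq_J_on[OF \<eta>'] by blast
  qed
  have "wfun f x y \<le> Ufun f y - Ufun f x"
  proof (rule wfun_le[OF xy])
    fix \<eta> assume "admissible \<eta>" "\<forall>t\<in>{0..1}. cle x (\<eta> t) \<and> cle (\<eta> t) y"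
    then have "Ufun f x \<le> Ufun f y - Jfun f \<eta>"
      using key by (intro Ufun_le) (simp add: algebra_simps)
    then show "Jfun f \<eta> \<le> Ufun f y - Ufun f x" by simp
  qed
  then show ?thesis by simp
qed

lemma Ufun_attains_on_sphere:
  assumes r: "0 < r"
  shows "\<exists>x\<in>sphere y r. cle x y \<and> x \<noteq> y \<and> Ufun f y = Ufun f x + wfun f x y"
proof -
  define K where "K = sphere y r \<inter> {x. cle x y}"
  have K: "compact K" "K \<noteq> {}"
  proof -
    show "compact K"
      unfolding K_def by (rule compact_Int_closed[OF compact_sphere closed_cle_below])
    have "dist y (y - r *\<^sub>R axis undefined 1) = r"
      using r by (simp add: dist_norm)
    moreover have "cle (y - r *\<^sub>R axis undefined 1) y"
      unfolding cle_def using r by (simp add: axis_def)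
    ultimately have "y - r *\<^sub>R axis undefined 1 \<in> K"
      unfolding K_def by simp
    then show "K \<noteq> {}" by blast
  qed
  have K_sub: "x \<in> K \<Longrightarrow> x \<in> sphere y r \<and> cle x y \<and> x \<noteq> y" for x
    unfolding K_def using r by auto
  then have "continuous_on K (\<lambda>x. Ufun f x + wfun f x y)"
    by (intro continuous_on_subset[OF continuous_on_Ufun_plus_wfun]) blast
  then obtain x where x: "x \<in> K" "\<forall>x'\<in>K. Ufun f x' + wfun f x' y \<le> Ufun f x + wfun f x y"
    using continuous_attains_sup[OF K] by blast
  have "Ufun f y \<le> Ufun f x + wfun f x y"
  proof (rule Ufun_le)
    fix \<gamma> :: "real \<Rightarrow> real^'n" assume "admissible \<gamma>" "cle (\<gamma> 1) y"
    then obtain x' where x': "dist y x' = r" "cle x' y" "Jfun f \<gamma> \<le> Ufun f x' + wfun f x' y"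
      using sphere_point_dominating_curve[OF r] by blast
    then have "x' \<in> K"
      unfolding K_def by simp
    then show "Jfun f \<gamma> \<le> Ufun f x + wfun f x y"
      using x(2) x'(3) by (meson order_trans)
  qed
  moreover have "x \<in> sphere y r" "cle x y" "x \<noteq> y"
    using K_sub[OF x(1)] by auto
  ultimately show ?thesis
    using Ufun_plus_wfun_le[of x y] by (intro bexI[of _ x]) auto
qed

end

theorem lemma2p3:
  fixes f :: "real^'n \<Rightarrow> real" and r :: real and y :: "real^'n"
  assumes dim: "CARD('n) \<ge> 2"
    and nonneg: "\<forall>x. 0 \<le> f x"
    and bdd: "bounded (range f)"
    and meas: "f \<in> borel_measurable borel"
    and supp: "closure {x. f x \<noteq> 0} \<subseteq> {x. \<forall>i. 0 \<le> x $ i \<and> x $ i \<le> 1}"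
    and r: "r > 0"
  shows "(\<exists>x\<in>sphere y r. cle x y \<and> x \<noteq> y \<and> Ufun f y = Ufun f x + wfun f x y)
       \<and> (\<forall>x\<in>sphere y r. cle x y \<and> x \<noteq> y \<longrightarrow> Ufun f x + wfun f x y \<le> Ufun f y)"
proof -
  obtain M where M: "\<forall>x. \<bar>f x\<bar> \<le> M"
    using bdd unfolding bounded_real by auto
  interpret cube_density f M
  proof
    show "0 \<le> f x" "f x \<le> M" for x
      using nonneg M abs_le_D1 by auto
    show "f \<in> borel_measurable borel"
      by (rule meas)
    show "x \<in> cbox 0 1" if "f x \<noteq> 0" for x
      using supp closure_subset[of "{x. f x \<noteq> 0}"] that unfolding mem_box_cart by auto
  qed
  show ?thesis
    using Ufun_attains_on_sphere[OF r] Ufun_plus_wfun_le by simp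
qed

end
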